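(* Let $0\le\underline{\tau}<\overline{\tau}<\infty$, $\gamma\ge 0$, $\delta\ge0$, let $f$ be a piecewise continuous probability density supported on $[\underline{\tau},\overline{\tau}]$, and let $\beta:[0,\infty)\to(0,\infty)$ be continuous and decreasing with $\lim_{x\to+\infty}\beta(x)=0$. Let $(x(t),y(t))$ be a solution of the system $$x'(t)=-\big(\delta+\beta(x(t))\big)x(t)+2\int_{\underline{\tau}}^{\overline{\tau}}e^{-\gamma\tau}f(\tau)\beta(x(t-\tau))x(t-\tau)\,d\tau,$$ $$y'(t)=-\gamma y(t)+\beta(x(t))x(t)-\int_{\underline{\tau}}^{\overline{\tau}}e^{-\gamma\tau}f(\tau)\beta(x(t-\tau))x(t-\tau)\,d\tau,\qquad t\ge\overline{\tau},$$ arising from the hematopoiesis model described in the context, so that $$y(t)=\int_{\underline{\tau}}^{\overline{\tau}}f(\tau)\left(\int_{t-\tau}^{t}e^{-\gamma(t-s)}\beta(x(s))x(s)\,ds\right)d\tau\quad\text{for } t\ge\overline{\tau}.$$ If $\lim_{t\to+\infty}x(t)$ exists and equals $C\ge0$, then $$\lim_{t\to+\infty}y(t)=\begin{cases}\beta(C)C\displaystyle\int_{\underline{\tau}}^{\overline{\tau}}f(\tau)\frac{1-e^{-\gamma\tau}}{\gamma}\,d\tau,&\gamma>0,\\[2mm] \beta(C)C\displaystyle\int_{\underline{\tau}}^{\overline{\tau}}\tau f(\tau)\,d\tau,&\gamma=0.\end{cases}$$ Moreover, if $x(t)$ is $P$-periodic, then $y(t)$ is also $P$-periodic.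
   Context: The model: $x(t)\ge0$ is the total resting (G$_0$) stem cell population and $y(t)\ge0$ the total proliferating population; resting cells die/differentiate at rate $\delta$ and enter proliferation at rate $\beta(x(t))$; proliferating cells die at rate $\gamma$ and divide (each into two resting cells) after a time distributed with density $f$. The function $x\mapsto x\beta(x)$ is Lipschitz continuous; for every initial resting population $\mu\ge0$ the model has a unique nonnegative continuous solution $(x,y)$ on $[0,\infty)$, which for $t\ge\overline{\tau}$ satisfies the displayed system and the displayed explicit formula for $y$. *)

theory Defs
  imports "HOL-Analysis.Analysis"
begin

definition piecewise_continuous_on :: "real \<Rightarrow> real \<Rightarrow> (real \<Rightarrow> real) \<Rightarrow> bool" where
  "piecewise_continuous_on a b f \<longleftrightarrow>
     (\<exists>S. finite S \<and> continuous_on ({a..b} - S) f \<and>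
        (\<forall>s\<in>S \<inter> {a..b}.
           (a < s \<longrightarrow> (\<exists>l. (f \<longlongrightarrow> l) (at_left s))) \<and>
           (s < b \<longrightarrow> (\<exists>l. (f \<longlongrightarrow> l) (at_right s)))))"

definition prob_density_on :: "real \<Rightarrow> real \<Rightarrow> (real \<Rightarrow> real) \<Rightarrow> bool" where
  "prob_density_on a b f \<longleftrightarrow>
     (\<forall>t. f t \<ge> 0) \<and> (\<forall>t. t \<notin> {a..b} \<longrightarrow> f t = 0) \<and> (f has_integral 1) {a..b}"

end

theory Submission imports Defs begin

text \<open>
  With the production flux \<open>g(s) = \<beta>(x(s)) x(s)\<close>, \<open>y(t)\<close> is the \<open>f\<close>-average over \<open>\<tau>\<close> of the
  window integrals \<open>W(t, \<tau>) = \<integral> e^(-\<gamma>(t-s)) g(s) ds\<close> over \<open>[t - \<tau>, t]\<close>.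
  If \<open>x \<rightarrow> C\<close> then \<open>g \<rightarrow> \<beta>(C) C\<close>, so \<open>W(t, \<tau>)\<close> converges to \<open>\<beta>(C) C\<close> times
  \<open>\<integral> e^(-\<gamma>u) du\<close> over \<open>[0, \<tau>]\<close>, uniformly for \<open>\<tau>\<close> in the bounded interval \<open>[\<tau>\<^sub>-, \<tau>\<^sub>+]\<close>, and
  averaging against the probability density \<open>f\<close> preserves uniform limits. If \<open>x\<close> is
  \<open>P\<close>-periodic, so is \<open>g\<close>, and shifting \<open>t\<close> by \<open>P\<close> leaves every window integral unchanged.
\<close>

definition decay_mass :: "real \<Rightarrow> real \<Rightarrow> real" where
  "decay_mass \<gamma> \<tau> = (if \<gamma> > 0 then (1 - exp (- \<gamma> * \<tau>)) / \<gamma> else \<tau>)"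

definition decayed_window :: "real \<Rightarrow> (real \<Rightarrow> real) \<Rightarrow> real \<Rightarrow> real \<Rightarrow> real" where
  "decayed_window \<gamma> g t \<tau> = integral {t - \<tau>..t} (\<lambda>s. exp (- \<gamma> * (t - s)) * g s)"

lemma continuous_on_decay_mass: "continuous_on S (decay_mass \<gamma>)"
  unfolding decay_mass_def by (cases "\<gamma> > 0") (auto intro!: continuous_intros)

lemma has_integral_exp_decay:
  fixes \<gamma> t \<tau> :: real
  assumes "\<gamma> \<ge> 0" "\<tau> \<ge> 0"
  shows "((\<lambda>s. exp (- \<gamma> * (t - s))) has_integral decay_mass \<gamma> \<tau>) {t - \<tau>..t}"
proof (cases "\<gamma> > 0")
  case True
  have "((\<lambda>s. exp (- \<gamma> * (t - s))) has_integral
          (exp (- \<gamma> * (t - t)) / \<gamma> - exp (- \<gamma> * (t - (t - \<tau>))) / \<gamma>)) {t - \<tau>..t}"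
  proof (rule fundamental_theorem_of_calculus)
    show "t - \<tau> \<le> t" using assms by simp
    fix s
    show "((\<lambda>s. exp (- \<gamma> * (t - s)) / \<gamma>) has_vector_derivative exp (- \<gamma> * (t - s)))
            (at s within {t - \<tau>..t})"
      unfolding has_real_derivative_iff_has_vector_derivative[symmetric]
      using True by (auto intro!: derivative_eq_intros simp: field_simps)
  qed
  then show ?thesis using True by (simp add: decay_mass_def diff_divide_distrib)
next
  case False
  then show ?thesis
    using assms has_integral_const_real[of "1::real" "t - \<tau>" t] by (simp add: decay_mass_def)
qed

lemma integral_mult_decay_mass:
  "integral S (\<lambda>\<tau>. f \<tau> * (c * decay_mass \<gamma> \<tau>))
     = (if \<gamma> > 0 then c * integral S (\<lambda>\<tau>. f \<tau> * (1 - exp (- \<gamma> * \<tau>)) / \<gamma>)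
        else c * integral S (\<lambda>\<tau>. \<tau> * f \<tau>))"
proof -
  have "integral S (\<lambda>\<tau>. f \<tau> * (c * decay_mass \<gamma> \<tau>)) = c * integral S (\<lambda>\<tau>. f \<tau> * decay_mass \<gamma> \<tau>)"
    by (subst mult.left_commute) (rule integral_mult_right)
  then show ?thesis
    by (simp add: decay_mass_def mult.commute)
qed

lemma nonneg_integrable_mult_continuous:
  fixes w h :: "real \<Rightarrow> real"
  assumes "w integrable_on {a..b}" "\<And>\<tau>. w \<tau> \<ge> 0" "continuous_on {a..b} h"
  shows "(\<lambda>\<tau>. w \<tau> * h \<tau>) integrable_on {a..b}"
proof -
  have "w absolutely_integrable_on {a..b}"
    using assms by (intro nonnegative_absolutely_integrable_1) auto
  moreover have "h \<in> borel_measurable (lebesgue_on {a..b})"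
    using assms(3) by (intro continuous_imp_measurable_on_sets_lebesgue) auto
  moreover have "bounded (h ` {a..b})"
    using assms(3) compact_Icc compact_continuous_image compact_imp_bounded by blast
  ultimately have "(\<lambda>\<tau>. h \<tau> * w \<tau>) absolutely_integrable_on {a..b}"
    by (intro absolutely_integrable_bounded_measurable_product_real) auto
  then show ?thesis
    by (simp add: mult.commute set_lebesgue_integral_eq_integral(1))
qed

lemma uniform_limit_weighted_integral:
  fixes w H :: "real \<Rightarrow> real" and h :: "'a \<Rightarrow> real \<Rightarrow> real"
  assumes w: "w integrable_on {a..b}" "\<And>\<tau>. w \<tau> \<ge> 0"
    and lim: "uniform_limit {a..b} h H F"
    and cont: "\<forall>\<^sub>F n in F. continuous_on {a..b} (h n)" "continuous_on {a..b} H"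
  shows "((\<lambda>n. integral {a..b} (\<lambda>\<tau>. w \<tau> * h n \<tau>)) \<longlongrightarrow> integral {a..b} (\<lambda>\<tau>. w \<tau> * H \<tau>)) F"
proof (rule tendstoI)
  fix e :: real assume "e > 0"
  define W where "W = integral {a..b} w"
  have "W \<ge> 0"
    unfolding W_def using w by (intro integral_nonneg) auto
  define \<epsilon> where "\<epsilon> = e / (W + 1)"
  have "\<epsilon> > 0" "W * \<epsilon> < e"
    using \<open>e > 0\<close> \<open>W \<ge> 0\<close> by (auto simp: \<epsilon>_def field_simps)
  have wH: "(\<lambda>\<tau>. w \<tau> * H \<tau>) integrable_on {a..b}"
    using nonneg_integrable_mult_continuous[OF w cont(2)] .
  show "\<forall>\<^sub>F n in F. dist (integral {a..b} (\<lambda>\<tau>. w \<tau> * h n \<tau>)) (integral {a..b} (\<lambda>\<tau>. w \<tau> * H \<tau>)) < e"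
    using uniform_limitD[OF lim \<open>\<epsilon> > 0\<close>] cont(1)
  proof eventually_elim
    case (elim n)
    have wh: "(\<lambda>\<tau>. w \<tau> * h n \<tau>) integrable_on {a..b}"
      using nonneg_integrable_mult_continuous[OF w elim(2)] .
    have "dist (integral {a..b} (\<lambda>\<tau>. w \<tau> * h n \<tau>)) (integral {a..b} (\<lambda>\<tau>. w \<tau> * H \<tau>))
        = norm (integral {a..b} (\<lambda>\<tau>. w \<tau> * h n \<tau> - w \<tau> * H \<tau>))"
      by (simp add: dist_norm integral_diff[OF wh wH])
    also have "\<dots> \<le> integral {a..b} (\<lambda>\<tau>. w \<tau> * \<epsilon>)"
    proof (rule integral_norm_bound_integral)
      show "(\<lambda>\<tau>. w \<tau> * h n \<tau> - w \<tau> * H \<tau>) integrable_on {a..b}"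
        using wh wH by (rule integrable_diff)
      show "(\<lambda>\<tau>. w \<tau> * \<epsilon>) integrable_on {a..b}"
        using w(1) by (rule integrable_on_mult_left)
      fix \<tau> assume "\<tau> \<in> {a..b}"
      then have "\<bar>h n \<tau> - H \<tau>\<bar> \<le> \<epsilon>"
        using elim(1) by (auto simp: dist_real_def less_imp_le)
      then show "norm (w \<tau> * h n \<tau> - w \<tau> * H \<tau>) \<le> w \<tau> * \<epsilon>"
        using w(2)[of \<tau>] by (auto simp: abs_mult right_diff_distrib[symmetric] intro: mult_left_mono)
    qed
    also have "\<dots> = W * \<epsilon>"
      by (simp add: W_def)
    finally show ?case using \<open>W * \<epsilon> < e\<close> by linarith
  qed
qed

lemma decayed_window_dist_le:
  fixes g :: "real \<Rightarrow> real"
  assumes "\<gamma> \<ge> 0" "\<tau> \<ge> 0" "continuous_on {t - \<tau>..t} g"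
    and close: "\<And>s. s \<in> {t - \<tau>..t} \<Longrightarrow> \<bar>g s - c\<bar> \<le> \<epsilon>"
  shows "\<bar>decayed_window \<gamma> g t \<tau> - c * decay_mass \<gamma> \<tau>\<bar> \<le> \<tau> * \<epsilon>"
proof -
  have kernel: "((\<lambda>s. c * exp (- \<gamma> * (t - s))) has_integral c * decay_mass \<gamma> \<tau>) {t - \<tau>..t}"
    using has_integral_exp_decay[OF assms(1,2)] by (rule has_integral_mult_right)
  have window_int: "(\<lambda>s. exp (- \<gamma> * (t - s)) * g s) integrable_on {t - \<tau>..t}"
    by (intro integrable_continuous_interval continuous_intros assms(3))
  have "integral {t - \<tau>..t} (\<lambda>s. exp (- \<gamma> * (t - s)) * (g s - c))
      = integral {t - \<tau>..t} (\<lambda>s. exp (- \<gamma> * (t - s)) * g s - c * exp (- \<gamma> * (t - s)))"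
    by (simp add: algebra_simps)
  also have "\<dots> = decayed_window \<gamma> g t \<tau> - c * decay_mass \<gamma> \<tau>"
    using integral_diff[OF window_int has_integral_integrable[OF kernel]] integral_unique[OF kernel]
    by (simp add: decayed_window_def)
  finally have "\<bar>decayed_window \<gamma> g t \<tau> - c * decay_mass \<gamma> \<tau>\<bar>
      = norm (integral {t - \<tau>..t} (\<lambda>s. exp (- \<gamma> * (t - s)) * (g s - c)))"
    by simp
  also have "\<dots> \<le> integral {t - \<tau>..t} (\<lambda>s. \<epsilon>)"
  proof (rule integral_norm_bound_integral)
    show "(\<lambda>s. exp (- \<gamma> * (t - s)) * (g s - c)) integrable_on {t - \<tau>..t}"
      by (intro integrable_continuous_interval continuous_intros assms(3))
    fix s assume s: "s \<in> {t - \<tau>..t}"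
    have "exp (- \<gamma> * (t - s)) \<le> 1"
      using s assms(1) by auto
    then have "exp (- \<gamma> * (t - s)) * \<bar>g s - c\<bar> \<le> 1 * \<epsilon>"
      using close[OF s] by (intro mult_mono) auto
    then show "norm (exp (- \<gamma> * (t - s)) * (g s - c)) \<le> \<epsilon>"
      by (simp add: abs_mult)
  qed auto
  also have "\<dots> = \<tau> * \<epsilon>"
    using assms(2) by simp
  finally show ?thesis .
qed

lemma uniform_limit_decayed_window:
  fixes g :: "real \<Rightarrow> real"
  assumes "\<gamma> \<ge> 0" "0 \<le> a" "continuous_on {0..} g" "(g \<longlongrightarrow> c) at_top"
  shows "uniform_limit {a..b} (decayed_window \<gamma> g) (\<lambda>\<tau>. c * decay_mass \<gamma> \<tau>) at_top"
proof (rule uniform_limitI)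
  fix e :: real assume "e > 0"
  define \<epsilon> where "\<epsilon> = e / (\<bar>b\<bar> + 1)"
  have "\<epsilon> > 0" "\<bar>b\<bar> * \<epsilon> < e"
    using \<open>e > 0\<close> by (auto simp: \<epsilon>_def field_simps)
  obtain T where T: "\<And>s. s \<ge> T \<Longrightarrow> \<bar>g s - c\<bar> < \<epsilon>"
    using tendstoD[OF assms(4) \<open>\<epsilon> > 0\<close>] by (auto simp: eventually_at_top_linorder dist_real_def)
  show "\<forall>\<^sub>F t in at_top. \<forall>\<tau>\<in>{a..b}. dist (decayed_window \<gamma> g t \<tau>) (c * decay_mass \<gamma> \<tau>) < e"
    unfolding eventually_at_top_linorder
  proof (intro exI allI impI ballI)
    fix t \<tau> assume t: "t \<ge> max T 0 + b" and \<tau>: "\<tau> \<in> {a..b}"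
    have "\<bar>decayed_window \<gamma> g t \<tau> - c * decay_mass \<gamma> \<tau>\<bar> \<le> \<tau> * \<epsilon>"
    proof (rule decayed_window_dist_le)
      show "continuous_on {t - \<tau>..t} g"
        using t \<tau> by (intro continuous_on_subset[OF assms(3)]) auto
      show "\<bar>g s - c\<bar> \<le> \<epsilon>" if "s \<in> {t - \<tau>..t}" for s
      proof -
        have "T \<le> s"
          using that t \<tau> max.cobounded1[of T 0] by auto
        then show ?thesis
          using T[of s] by simp
      qed
    qed (use assms \<tau> in auto)
    also have "\<dots> \<le> \<bar>b\<bar> * \<epsilon>"
      using \<tau> assms(2) \<open>\<epsilon> > 0\<close> by (intro mult_right_mono) auto
    finally show "dist (decayed_window \<gamma> g t \<tau>) (c * decay_mass \<gamma> \<tau>) < e"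
      using \<open>\<bar>b\<bar> * \<epsilon> < e\<close> by (simp add: dist_real_def)
  qed
qed

lemma continuous_on_decayed_window:
  fixes g :: "real \<Rightarrow> real"
  assumes "continuous_on {0..} g" "0 \<le> a" "b \<le> t"
  shows "continuous_on {a..b} (decayed_window \<gamma> g t)"
proof -
  have "(\<lambda>s. exp (- \<gamma> * (t - s)) * g s) integrable_on {t - b..t}"
    using assms
    by (intro integrable_continuous_interval continuous_intros continuous_on_subset[OF assms(1)]) auto
  then have "continuous_on {t - b..t} (\<lambda>u. integral {u..t} (\<lambda>s. exp (- \<gamma> * (t - s)) * g s))"
    by (rule indefinite_integral_continuous_1')
  then have "continuous_on {a..b} ((\<lambda>u. integral {u..t} (\<lambda>s. exp (- \<gamma> * (t - s)) * g s)) \<circ> (\<lambda>\<tau>. t - \<tau>))"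
    using assms by (intro continuous_on_compose continuous_intros) (auto elim: continuous_on_subset)
  then show ?thesis
    by (simp add: decayed_window_def o_def)
qed

lemma decayed_window_periodic:
  fixes g :: "real \<Rightarrow> real"
  assumes per: "\<And>s. s \<ge> 0 \<Longrightarrow> g (s + P) = g s" and "\<tau> \<le> t"
  shows "decayed_window \<gamma> g (t + P) \<tau> = decayed_window \<gamma> g t \<tau>"
proof -
  have "decayed_window \<gamma> g (t + P) \<tau>
      = integral {t - \<tau>..t} ((\<lambda>s. exp (- \<gamma> * (t + P - s)) * g s) \<circ> (\<lambda>s. P + s))"
    using integral_shift_Icc_real[of "t - \<tau>" t "\<lambda>s. exp (- \<gamma> * (t + P - s)) * g s" P]
    by (simp add: decayed_window_def diff_add_eq)
  also have "\<dots> = decayed_window \<gamma> g t \<tau>"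
    unfolding decayed_window_def
    by (rule integral_cong) (use per assms(2) in \<open>auto simp: add.commute\<close>)
  finally show ?thesis .
qed

theorem lemma2p1:
  fixes tlo thi \<gamma> \<delta> :: real
    and f \<beta> x y :: "real \<Rightarrow> real"
  assumes tau: "0 \<le> tlo" "tlo < thi"
    and gd: "\<gamma> \<ge> 0" "\<delta> \<ge> 0"
    and f_pc: "piecewise_continuous_on tlo thi f"
    and f_dens: "prob_density_on tlo thi f"
    and beta_cont: "continuous_on {0..} \<beta>"
    and beta_pos: "\<And>u. u \<ge> 0 \<Longrightarrow> \<beta> u > 0"
    and beta_decr: "\<And>u v. 0 \<le> u \<Longrightarrow> u \<le> v \<Longrightarrow> \<beta> v \<le> \<beta> u"
    and beta_lim: "(\<beta> \<longlongrightarrow> 0) at_top"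
    and lip: "\<exists>L. \<forall>u\<ge>0. \<forall>v\<ge>0. \<bar>u * \<beta> u - v * \<beta> v\<bar> \<le> L * \<bar>u - v\<bar>"
    and x_nonneg: "\<And>t. t \<ge> 0 \<Longrightarrow> x t \<ge> 0"
    and y_nonneg: "\<And>t. t \<ge> 0 \<Longrightarrow> y t \<ge> 0"
    and x_cont: "continuous_on {0..} x"
    and y_cont: "continuous_on {0..} y"
    and x_ode: "\<And>t. t \<ge> thi \<Longrightarrow>
        (x has_real_derivative
          (- (\<delta> + \<beta> (x t)) * x t
           + 2 * integral {tlo..thi} (\<lambda>\<tau>. exp (- \<gamma> * \<tau>) * f \<tau> * \<beta> (x (t - \<tau>)) * x (t - \<tau>))))
        (at t within {thi..})"
    and y_ode: "\<And>t. t \<ge> thi \<Longrightarrow>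
        (y has_real_derivative
          (- \<gamma> * y t + \<beta> (x t) * x t
           - integral {tlo..thi} (\<lambda>\<tau>. exp (- \<gamma> * \<tau>) * f \<tau> * \<beta> (x (t - \<tau>)) * x (t - \<tau>))))
        (at t within {thi..})"
    and y_formula: "\<And>t. t \<ge> thi \<Longrightarrow>
        y t = integral {tlo..thi}
               (\<lambda>\<tau>. f \<tau> * integral {t - \<tau>..t} (\<lambda>s. exp (- \<gamma> * (t - s)) * \<beta> (x s) * x s))"
  shows "(\<forall>C. C \<ge> 0 \<longrightarrow> (x \<longlongrightarrow> C) at_top \<longrightarrow>
            (y \<longlongrightarrow>
               (if \<gamma> > 0
                then \<beta> C * C * integral {tlo..thi} (\<lambda>\<tau>. f \<tau> * (1 - exp (- \<gamma> * \<tau>)) / \<gamma>)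
                else \<beta> C * C * integral {tlo..thi} (\<lambda>\<tau>. \<tau> * f \<tau>))) at_top)
       \<and> (\<forall>P. P > 0 \<longrightarrow> (\<forall>t\<ge>0. x (t + P) = x t) \<longrightarrow> (\<forall>t\<ge>thi. y (t + P) = y t))"
proof -
  define g where "g s = \<beta> (x s) * x s" for s
  have g_cont: "continuous_on {0..} g"
    unfolding g_def using x_nonneg
    by (intro continuous_intros x_cont continuous_on_compose2[OF beta_cont x_cont]) auto
  have y_eq: "y t = integral {tlo..thi} (\<lambda>\<tau>. f \<tau> * decayed_window \<gamma> g t \<tau>)" if "t \<ge> thi" for t
    using y_formula[OF that] by (simp add: decayed_window_def g_def mult.assoc)
  show ?thesis
  proof (intro conjI allI impI)
    fix C assume "C \<ge> 0" and x_lim: "(x \<longlongrightarrow> C) at_top"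
    have "(g \<longlongrightarrow> \<beta> C * C) at_top"
      unfolding g_def using \<open>C \<ge> 0\<close> x_nonneg
      by (intro tendsto_mult x_lim continuous_on_tendsto_compose[OF beta_cont x_lim])
         (auto simp: eventually_at_top_linorder)
    then have "((\<lambda>t. integral {tlo..thi} (\<lambda>\<tau>. f \<tau> * decayed_window \<gamma> g t \<tau>)) \<longlongrightarrow>
                 integral {tlo..thi} (\<lambda>\<tau>. f \<tau> * (\<beta> C * C * decay_mass \<gamma> \<tau>))) at_top"
      using f_dens tau g_cont
      by (intro uniform_limit_weighted_integral uniform_limit_decayed_window gd(1)
          continuous_on_decay_mass continuous_intros)
         (auto simp: prob_density_on_def eventually_at_top_linorder
           intro!: exI[of _ thi] continuous_on_decayed_window)
    then have "(y \<longlongrightarrow> integral {tlo..thi} (\<lambda>\<tau>. f \<tau> * (\<beta> C * C * decay_mass \<gamma> \<tau>))) at_top"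
      by (rule Lim_transform_eventually) (auto simp: eventually_at_top_linorder y_eq intro!: exI[of _ thi])
    then show "(y \<longlongrightarrow>
               (if \<gamma> > 0
                then \<beta> C * C * integral {tlo..thi} (\<lambda>\<tau>. f \<tau> * (1 - exp (- \<gamma> * \<tau>)) / \<gamma>)
                else \<beta> C * C * integral {tlo..thi} (\<lambda>\<tau>. \<tau> * f \<tau>))) at_top"
      by (simp only: integral_mult_decay_mass)
  next
    fix P t :: real
    assume "P > 0" and "\<forall>t\<ge>0. x (t + P) = x t" and "t \<ge> thi"
    then have "decayed_window \<gamma> g (t + P) \<tau> = decayed_window \<gamma> g t \<tau>" if "\<tau> \<in> {tlo..thi}" for \<tau>
      using that by (intro decayed_window_periodic) (auto simp: g_def)
    then show "y (t + P) = y t"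
      using \<open>t \<ge> thi\<close> \<open>P > 0\<close> by (simp add: y_eq) (rule integral_cong, simp)
  qed
qed

end
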